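(* Let $\mathcal H$ be a regular unitarily invariant space and let $\mathfrak a$ be a weak-$*$ closed prime ideal of $\mathcal M(\mathcal H)$. If $\mathcal Z_{\mathbb B_d}(\mathfrak a)$ has positive dimension as a complex analytic variety, then $\operatorname{Loc}(\mathfrak a)$ is empty.
   Context: A regular unitarily invariant space: a reproducing kernel Hilbert space $\mathcal H$ of holomorphic functions on $\mathbb B_d$ with kernel $K(z,w)=1+\sum_{n\ge1}a_n\langle z,w\rangle^n$, $a_n>0$, $a_n/a_{n+1}\to1$, having the complete Nevanlinna–Pick property. $\mathcal M(\mathcal H)$ is the multiplier algebra. $\mathcal Z_{\mathbb B_d}(\mathfrak a)=\{z\in\mathbb B_d: f(z)=0\ \forall f\in\mathfrak a\}$. $\operatorname{supp}(\mathfrak a)=\{z\in\mathbb C^d: 1\notin\mathfrak a+\sum_j(x_j-z_j)\mathcal M(\mathcal H)\}$. A weak-$*$ closed ideal $\mathfrak a$ is localizable at $z\in\mathbb C^d$ if for every $r>0$ there exist weak-$*$ closed ideals $\mathfrak b,\mathfrak c\subset\mathcal M(\mathcal H)$ with $\mathfrak c\not\subset\mathfrak a$, $\mathfrak b\mathfrak c\subset\mathfrak a$, and $\operatorname{supp}(\mathfrak a)\cap\operatorname{supp}(\mathfrak b)\subset B(z,r)$ (open ball of radius $r$ about $z$); $\operatorname{Loc}(\mathfrak a)$ is the set of such points. *)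

theory Defs
  imports "HOL-Analysis.Analysis"
begin

text \<open>Points of C^d are vectors of type complex^'n (d = CARD('n)); the open unit
ball B_d is ball 0 1 for the Euclidean norm.  Functions are of type
complex^'n => complex; only their values on B_d matter.  Elements of the
multiplier algebra are normalised to vanish off B_d.\<close>

definition cinner :: "complex^'n \<Rightarrow> complex^'n \<Rightarrow> complex" where
  "cinner z w = (\<Sum>i\<in>UNIV. z$i * cnj (w$i))"

definition Bd :: "(complex^'n) set" where
  "Bd = ball 0 1"

text \<open>K(z,w) = 1 + sum_{n>=1} a_n <z,w>^n; the value a 0 is irrelevant.\<close>
definition kern :: "(nat \<Rightarrow> real) \<Rightarrow> complex^'n \<Rightarrow> complex^'n \<Rightarrow> complex" where
  "kern a z w = 1 + (\<Sum>n. complex_of_real (a (Suc n)) * cinner z w ^ Suc n)"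

definition psd_kernel :: "('x \<Rightarrow> 'x \<Rightarrow> complex) \<Rightarrow> 'x set \<Rightarrow> bool" where
  "psd_kernel k S \<longleftrightarrow>
     (\<forall>(xs :: 'x list) (c :: nat \<Rightarrow> complex). set xs \<subseteq> S \<longrightarrow>
        (let s = (\<Sum>i<length xs. \<Sum>j<length xs. cnj (c i) * c j * k (xs!i) (xs!j))
         in Im s = 0 \<and> Re s \<ge> 0))"

text \<open>Regular unitarily invariant space with the complete Nevanlinna-Pick property
(for the normalised kernel K: 1 - 1/K is positive semidefinite).\<close>
definition regular_ui :: "'n::finite itself \<Rightarrow> (nat \<Rightarrow> real) \<Rightarrow> bool" where
  "regular_ui (_ :: 'n::finite itself) a \<longleftrightarrow>
     (\<forall>n\<ge>1. a n > 0) \<and>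
     ((\<lambda>n. a (Suc n) / a (Suc (Suc n))) \<longlonglongrightarrow> 1) \<and>
     psd_kernel (\<lambda>z w. 1 - 1 / kern a z w) (Bd :: (complex^'n) set)"

text \<open>Membership in the RKHS H(K) (Aronszajn): f in H with norm <= c iff
c^2 K(z,w) - f(z) conj(f(w)) is a positive kernel on B_d.\<close>
definition in_H :: "(nat \<Rightarrow> real) \<Rightarrow> (complex^'n \<Rightarrow> complex) \<Rightarrow> bool" where
  "in_H a f \<longleftrightarrow>
     (\<exists>c\<ge>0. psd_kernel (\<lambda>z w. complex_of_real (c\<^sup>2) * kern a z w - f z * cnj (f w)) Bd)"

definition hnorm :: "(nat \<Rightarrow> real) \<Rightarrow> (complex^'n \<Rightarrow> complex) \<Rightarrow> real" where
  "hnorm a f = Inf {c. c \<ge> 0 \<and>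
     psd_kernel (\<lambda>z w. complex_of_real (c\<^sup>2) * kern a z w - f z * cnj (f w)) Bd}"

definition Mult :: "(nat \<Rightarrow> real) \<Rightarrow> (complex^'n \<Rightarrow> complex) set" where
  "Mult a = {\<phi>. (\<forall>f. in_H a f \<longrightarrow> in_H a (\<lambda>z. \<phi> z * f z)) \<and> (\<forall>z. z \<notin> Bd \<longrightarrow> \<phi> z = 0)}"

definition one_M :: "complex^'n \<Rightarrow> complex" where
  "one_M = (\<lambda>z. if z \<in> Bd then 1 else 0)"

definition mideal :: "(nat \<Rightarrow> real) \<Rightarrow> (complex^'n \<Rightarrow> complex) set \<Rightarrow> bool" where
  "mideal a I \<longleftrightarrow> I \<subseteq> Mult a \<and> (\<lambda>z. 0) \<in> I \<and>
     (\<forall>f\<in>I. \<forall>g\<in>I. (\<lambda>z. f z + g z) \<in> I) \<and>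
     (\<forall>f\<in>I. \<forall>g\<in>Mult a. (\<lambda>z. g z * f z) \<in> I)"

text \<open>Weak-* closedness (via Krein-Smulian and the agreement of the weak-* topology
with pointwise convergence on B_d on bounded subsets of M(H); balls are metrisable):
limits of pointwise convergent, multiplier-norm bounded sequences stay in I.\<close>
definition wstar_closed :: "(nat \<Rightarrow> real) \<Rightarrow> (complex^'n \<Rightarrow> complex) set \<Rightarrow> bool" where
  "wstar_closed a I \<longleftrightarrow>
     (\<forall>(\<phi> :: nat \<Rightarrow> complex^'n \<Rightarrow> complex) \<psi> (C::real).
        (\<forall>k. \<phi> k \<in> I) \<and>
        (\<forall>k f. in_H a f \<longrightarrow> hnorm a (\<lambda>z. \<phi> k z * f z) \<le> C * hnorm a f) \<and>
        (\<forall>z\<in>Bd. (\<lambda>k. \<phi> k z) \<longlonglongrightarrow> \<psi> z) \<and>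
        (\<forall>z. z \<notin> Bd \<longrightarrow> \<psi> z = 0)
        \<longrightarrow> \<psi> \<in> I)"

definition wstar_ideal :: "(nat \<Rightarrow> real) \<Rightarrow> (complex^'n \<Rightarrow> complex) set \<Rightarrow> bool" where
  "wstar_ideal a I \<longleftrightarrow> mideal a I \<and> wstar_closed a I"

definition prime_mideal :: "(nat \<Rightarrow> real) \<Rightarrow> (complex^'n \<Rightarrow> complex) set \<Rightarrow> bool" where
  "prime_mideal a I \<longleftrightarrow> mideal a I \<and> one_M \<notin> I \<and>
     (\<forall>f\<in>Mult a. \<forall>g\<in>Mult a. (\<lambda>z. f z * g z) \<in> I \<longrightarrow> f \<in> I \<or> g \<in> I)"

definition supp :: "(nat \<Rightarrow> real) \<Rightarrow> (complex^'n \<Rightarrow> complex) set \<Rightarrow> (complex^'n) set" where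
  "supp a I = {z. \<not> (\<exists>f\<in>I. \<exists>g :: 'n \<Rightarrow> complex^'n \<Rightarrow> complex. (\<forall>j. g j \<in> Mult a) \<and>
        (\<forall>w\<in>Bd. f w + (\<Sum>j\<in>UNIV. (w$j - z$j) * g j w) = 1))}"

definition ZB :: "(complex^'n \<Rightarrow> complex) set \<Rightarrow> (complex^'n) set" where
  "ZB I = {z\<in>Bd. \<forall>f\<in>I. f z = 0}"

definition Loc :: "(nat \<Rightarrow> real) \<Rightarrow> (complex^'n \<Rightarrow> complex) set \<Rightarrow> (complex^'n) set" where
  "Loc a I = {z. \<forall>r>0. \<exists>b c. wstar_ideal a b \<and> wstar_ideal a c \<and> \<not> c \<subseteq> I \<and>
       (\<forall>f\<in>b. \<forall>g\<in>c. (\<lambda>w. f w * g w) \<in> I) \<and>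
       supp a I \<inter> supp a b \<subseteq> ball z r}"

text \<open>An analytic subvariety V of B_d has positive dimension iff it is not discrete,
i.e. some point of V is an accumulation point of V.\<close>
definition pos_dim_variety :: "(complex^'n) set \<Rightarrow> bool" where
  "pos_dim_variety V \<longleftrightarrow> (\<exists>p\<in>V. p islimpt V)"

end

theory Submission
  imports Defs
begin

text \<open>If \<open>z \<in> Loc(\<aa>)\<close>, pick \<open>\<bb>, \<cc>\<close> for a radius \<open>r\<close>; primality and \<open>\<cc> \<not>\<subseteq> \<aa>\<close> force
\<open>\<bb> \<subseteq> \<aa>\<close>, so \<open>supp(\<aa>) \<subseteq> supp(\<bb>)\<close> lies in \<open>B(z,r)\<close>. As \<open>r\<close> is arbitrary, \<open>supp(\<aa>) \<subseteq> {z}\<close>.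
But every zero of \<open>\<aa>\<close> in the ball lies in \<open>supp(\<aa>)\<close>, and a positive-dimensional
zero variety has more than one point.\<close>

lemma ZB_subset_supp:
  fixes I :: "(complex^'n \<Rightarrow> complex) set"
  shows "ZB I \<subseteq> supp a I"
proof
  fix w assume w: "w \<in> ZB I"
  have "f w + (\<Sum>j\<in>UNIV. (w$j - w$j) * g j w) \<noteq> 1" if "f \<in> I" for f and g :: "'n \<Rightarrow> _"
    using w that by (auto simp: ZB_def)
  moreover have "w \<in> Bd"
    using w by (simp add: ZB_def)
  ultimately show "w \<in> supp a I"
    unfolding supp_def by blast
qed

lemma supp_antimono: "J \<subseteq> I \<Longrightarrow> supp a I \<subseteq> supp a J"
  unfolding supp_def by blast

lemma prime_mideal_factor_subset:
  assumes "prime_mideal a I"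
    and "J \<subseteq> Mult a" and "K \<subseteq> Mult a" and "\<not> K \<subseteq> I"
    and "\<forall>f\<in>J. \<forall>g\<in>K. (\<lambda>w. f w * g w) \<in> I"
  shows "J \<subseteq> I"
proof
  fix f assume "f \<in> J"
  obtain g where "g \<in> K" "g \<notin> I"
    using assms(4) by blast
  then show "f \<in> I"
    using assms \<open>f \<in> J\<close> unfolding prime_mideal_def by blast
qed

lemma supp_subset_singleton_if_Loc:
  assumes "prime_mideal a I" and "z \<in> Loc a I"
  shows "supp a I \<subseteq> {z}"
proof -
  have "supp a I \<subseteq> ball z r" if "r > 0" for r
  proof -
    obtain J K where J: "wstar_ideal a J" and K: "wstar_ideal a K" and "\<not> K \<subseteq> I"
      and "\<forall>f\<in>J. \<forall>g\<in>K. (\<lambda>w. f w * g w) \<in> I" and "supp a I \<inter> supp a J \<subseteq> ball z r"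
      using assms(2) \<open>r > 0\<close> unfolding Loc_def by blast
    moreover have "J \<subseteq> Mult a" "K \<subseteq> Mult a"
      using J K by (simp_all add: wstar_ideal_def mideal_def)
    ultimately have "J \<subseteq> I"
      using prime_mideal_factor_subset assms(1) by blast
    with \<open>supp a I \<inter> supp a J \<subseteq> ball z r\<close> show ?thesis
      using supp_antimono by blast
  qed
  then show ?thesis
    by (metis dist_pos_lt mem_ball order_less_irrefl singletonI subset_eq)
qed

lemma pos_dim_variety_not_subset_singleton:
  assumes "pos_dim_variety V"
  shows "\<not> V \<subseteq> {z}"
proof
  assume "V \<subseteq> {z}"
  moreover obtain p where "p \<in> V" "p islimpt V"
    using assms unfolding pos_dim_variety_def by blast
  ultimately show False
    by (metis finite_subset finite.emptyI finite_insert islimpt_finite)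
qed

theorem theorem4p4:
  fixes a :: "nat \<Rightarrow> real" and I :: "(complex^'n \<Rightarrow> complex) set"
  assumes "regular_ui TYPE('n) a"
    and "wstar_ideal a I"
    and "prime_mideal a I"
    and "pos_dim_variety (ZB I)"
  shows "Loc a I = {}"
proof (rule ccontr)
  assume "Loc a I \<noteq> {}"
  then obtain z where "z \<in> Loc a I"
    by blast
  then have "ZB I \<subseteq> {z}"
    using ZB_subset_supp supp_subset_singleton_if_Loc assms(3) by blast
  with assms(4) show False
    using pos_dim_variety_not_subset_singleton by blast
qed

end
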